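(* Let $P$ be a $\mathcal{V}$-poset, $A$ a maximal antichain of $P$, and let $P\cup\{g\}$ be obtained by adding a new greatest element $g$. For $a\in A$ let $P_a$ be the set related to $a$ computed in $P$ and $P'_a$ the set related to $a$ computed in $P\cup\{g\}$. Then: (i) the number $b(A)$ of basic elements in $A$ is the same in $P$ and in $P\cup\{g\}$; (ii) if $a$ is an upper element, $P'_a=P_a$; (iii) if $a$ is a lower element not associated to the set of all basic elements of $P$, then $P'_a=P_a$; (iv) if $a$ is a lower element associated to the set of all basic elements of $P$, then $P'_a=P_a\cup\{g\}$.
   Context: All posets are finite. A $\mathcal{V}$-poset is a poset generated from the empty poset by repeatedly applying: disjoint union of $\mathcal{V}$-posets, adding a new greatest element, adding a new least element. An element $x$ is basic if: (B.1) there are no two incomparable elements $u,v$ with $x>u$ and $x>v$; (B.2) there are no two incomparable elements $u,v$ with $x<u$ and $x<v$; (B.3) there is no element $u$ with $u<x$ such that for all $w\neq u,x$ one has ($u\ge w\iff x\ge w$) and ($u\le w\iff x\le w$). An element is associated to a set $B$ of basic elements if it is comparable to every element of $B$ and incomparable to every other basic element. A non-basic element $u$ is upper if $u>b$ for some basic $b$, and lower if $u<b$ for some basic $b$. For an element $a$ of a $\mathcal{V}$-poset $Q$, the set related to $a$ in $Q$ is defined as follows: if $a$ is basic, $Q_a=\emptyset$; otherwise let $B$ be the set of basic elements to which $a$ is associated; if $a$ is a lower element, $Q_a=\{b\in Q: a<b,\ \text{there is no } c \text{ with } c<b \text{ and } c \text{ incomparable to } a\}$; if $a$ is an upper element, $Q_a=\{b\in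 Q: a>b,\ \text{there is no } c \text{ with } c>b \text{ and } c \text{ incomparable to } a\}\setminus\{\ell\in Q: \ell \text{ is a lower element associated to } B\}$. *)

theory Defs
  imports Main
begin

text \<open>A finite poset is represented by its carrier S and its (reflexive) order
relation R, a set of pairs with (x,y) in R meaning x \<le> y.\<close>

inductive vposet :: "'a set \<Rightarrow> ('a \<times> 'a) set \<Rightarrow> bool" where
  empty: "vposet {} {}"
| union: "vposet S1 R1 \<Longrightarrow> vposet S2 R2 \<Longrightarrow> S1 \<inter> S2 = {} \<Longrightarrow>
          vposet (S1 \<union> S2) (R1 \<union> R2)"
| top: "vposet S R \<Longrightarrow> g \<notin> S \<Longrightarrow>
          vposet (insert g S) (R \<union> {(x, g) | x. x \<in> insert g S})"
| bot: "vposet S R \<Longrightarrow> l \<notin> S \<Longrightarrow>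
          vposet (insert l S) (R \<union> {(l, x) | x. x \<in> insert l S})"

definition add_top_rel :: "'a set \<Rightarrow> ('a \<times> 'a) set \<Rightarrow> 'a \<Rightarrow> ('a \<times> 'a) set" where
  "add_top_rel S R g = R \<union> {(x, g) | x. x \<in> insert g S}"

definition pless :: "('a \<times> 'a) set \<Rightarrow> 'a \<Rightarrow> 'a \<Rightarrow> bool" where
  "pless R x y \<longleftrightarrow> (x, y) \<in> R \<and> x \<noteq> y"

definition comparable :: "('a \<times> 'a) set \<Rightarrow> 'a \<Rightarrow> 'a \<Rightarrow> bool" where
  "comparable R x y \<longleftrightarrow> (x, y) \<in> R \<or> (y, x) \<in> R"

definition antichain :: "'a set \<Rightarrow> ('a \<times> 'a) set \<Rightarrow> 'a set \<Rightarrow> bool" where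
  "antichain S R A \<longleftrightarrow> A \<subseteq> S \<and> (\<forall>x\<in>A. \<forall>y\<in>A. x \<noteq> y \<longrightarrow> \<not> comparable R x y)"

definition maximal_antichain :: "'a set \<Rightarrow> ('a \<times> 'a) set \<Rightarrow> 'a set \<Rightarrow> bool" where
  "maximal_antichain S R A \<longleftrightarrow> antichain S R A \<and>
     (\<forall>B. antichain S R B \<and> A \<subseteq> B \<longrightarrow> B = A)"

definition basic :: "'a set \<Rightarrow> ('a \<times> 'a) set \<Rightarrow> 'a \<Rightarrow> bool" where
  "basic S R x \<longleftrightarrow> x \<in> S \<and>
     \<not> (\<exists>u\<in>S. \<exists>v\<in>S. pless R u x \<and> pless R v x \<and> \<not> comparable R u v) \<and>
     \<not> (\<exists>u\<in>S. \<exists>v\<in>S. pless R x u \<and> pless R x v \<and> \<not> comparable R u v) \<and>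
     \<not> (\<exists>u\<in>S. pless R u x \<and>
          (\<forall>w\<in>S. w \<noteq> u \<and> w \<noteq> x \<longrightarrow>
             (((w, u) \<in> R \<longleftrightarrow> (w, x) \<in> R) \<and> ((u, w) \<in> R \<longleftrightarrow> (x, w) \<in> R))))"

definition basics :: "'a set \<Rightarrow> ('a \<times> 'a) set \<Rightarrow> 'a set" where
  "basics S R = {x \<in> S. basic S R x}"

definition associated :: "'a set \<Rightarrow> ('a \<times> 'a) set \<Rightarrow> 'a \<Rightarrow> 'a set \<Rightarrow> bool" where
  "associated S R a B \<longleftrightarrow> a \<in> S \<and> B \<subseteq> basics S R \<and>
     (\<forall>b\<in>B. comparable R a b) \<and> (\<forall>b\<in>basics S R - B. \<not> comparable R a b)"

definition upper :: "'a set \<Rightarrow> ('a \<times> 'a) set \<Rightarrow> 'a \<Rightarrow> bool" where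
  "upper S R u \<longleftrightarrow> u \<in> S \<and> \<not> basic S R u \<and> (\<exists>b\<in>basics S R. pless R b u)"

definition lower :: "'a set \<Rightarrow> ('a \<times> 'a) set \<Rightarrow> 'a \<Rightarrow> bool" where
  "lower S R u \<longleftrightarrow> u \<in> S \<and> \<not> basic S R u \<and> (\<exists>b\<in>basics S R. pless R u b)"

text \<open>The set related to a. The set B of basic elements to which a is
associated is {b basic. comparable a b}.\<close>
definition related :: "'a set \<Rightarrow> ('a \<times> 'a) set \<Rightarrow> 'a \<Rightarrow> 'a set" where
  "related S R a =
    (if basic S R a then {}
     else if lower S R a then
       {b \<in> S. pless R a b \<and> \<not> (\<exists>c\<in>S. pless R c b \<and> \<not> comparable R c a)}
     else if upper S R a then
       {b \<in> S. pless R b a \<and> \<not> (\<exists>c\<in>S. pless R b c \<and> \<not> comparable R c a)}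
       - {l \<in> S. lower S R l \<and>
                 associated S R l {b \<in> basics S R. comparable R a b}}
     else {})"

end

theory Submission
  imports Defs
begin

(*
  Adding a greatest element g changes neither the basic elements nor the kind (basic, lower,
  upper, associated set) of any old element.  Indeed g is comparable to everything, and it is
  never basic: a maximal element m of P is either above all of P, and then a twin of g in the
  sense of (B.3), or incomparable to some element, and the two form a fork below g.  So the
  related set of an upper element can only change through candidates c = g, which are
  comparable to a anyway; for a lower element a the only possible new member is g itself,
  and g belongs to it exactly when every element of P is comparable to a.

  Two structural facts about V-posets turn this into the four claims: no element is both
  lower and upper, and a lower element comparable to all basic elements is comparable to all
  elements.  Both are proved by induction over the construction of V-posets, together with
  the facts that keep the induction going: a maximal element exists, basic elements exist,
  and in a chain the basic elements are exactly the least elements (this decides whether a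
  new least element is basic).
*)

section \<open>Basic elements\<close>

definition fork_below :: "'a set \<Rightarrow> ('a \<times> 'a) set \<Rightarrow> 'a \<Rightarrow> bool" where
  "fork_below S R x \<longleftrightarrow> (\<exists>u\<in>S. \<exists>v\<in>S. pless R u x \<and> pless R v x \<and> \<not> comparable R u v)"

definition fork_above :: "'a set \<Rightarrow> ('a \<times> 'a) set \<Rightarrow> 'a \<Rightarrow> bool" where
  "fork_above S R x \<longleftrightarrow> (\<exists>u\<in>S. \<exists>v\<in>S. pless R x u \<and> pless R x v \<and> \<not> comparable R u v)"

definition twin_below :: "'a set \<Rightarrow> ('a \<times> 'a) set \<Rightarrow> 'a \<Rightarrow> 'a \<Rightarrow> bool" where
  "twin_below S R u x \<longleftrightarrow> pless R u x \<and>
     (\<forall>w\<in>S. w \<noteq> u \<and> w \<noteq> x \<longrightarrow> ((w, u) \<in> R \<longleftrightarrow> (w, x) \<in> R) \<and> ((u, w) \<in> R \<longleftrightarrow> (x, w) \<in> R))"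

definition least_in :: "'a set \<Rightarrow> ('a \<times> 'a) set \<Rightarrow> 'a \<Rightarrow> bool" where
  "least_in S R x \<longleftrightarrow> (\<forall>w\<in>S. w \<noteq> x \<longrightarrow> (w, x) \<notin> R \<and> (x, w) \<in> R)"

definition chain_in :: "'a set \<Rightarrow> ('a \<times> 'a) set \<Rightarrow> bool" where
  "chain_in S R \<longleftrightarrow> (\<forall>x\<in>S. \<forall>y\<in>S. comparable R x y)"

lemma basic_iff:
  "basic S R x \<longleftrightarrow>
     x \<in> S \<and> \<not> fork_below S R x \<and> \<not> fork_above S R x \<and> \<not> (\<exists>u\<in>S. twin_below S R u x)"
  unfolding basic_def fork_below_def fork_above_def twin_below_def ..

lemma basics_subset: "basics S R \<subseteq> S"
  unfolding basics_def by auto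

lemma
  assumes "R' \<inter> S \<times> S = R" "x \<in> S" "y \<in> S"
  shows pless_restrict: "pless R' x y \<longleftrightarrow> pless R x y"
    and comparable_restrict: "comparable R' x y \<longleftrightarrow> comparable R x y"
  using assms unfolding pless_def comparable_def by auto

lemma
  assumes restrict: "R' \<inter> S \<times> S = R"
    and basics_eq: "basics S' R' = basics S R"
    and "S \<subseteq> S'" "a \<in> S"
  shows lower_iff_of_basics_eq: "lower S' R' a \<longleftrightarrow> lower S R a"
    and upper_iff_of_basics_eq: "upper S' R' a \<longleftrightarrow> upper S R a"
    and associated_iff_of_basics_eq:
      "associated S' R' a B \<longleftrightarrow> associated S R a B"
proof -
  have basic_a: "basic S' R' a \<longleftrightarrow> basic S R a"
    using basics_eq \<open>S \<subseteq> S'\<close> \<open>a \<in> S\<close> unfolding basics_def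
    by (metis (no_types, lifting) mem_Collect_eq subsetD)
  have "pless R' a b \<longleftrightarrow> pless R a b" "pless R' b a \<longleftrightarrow> pless R b a"
    "comparable R' a b \<longleftrightarrow> comparable R a b"
    if "b \<in> basics S R" for b
  proof -
    have "b \<in> S"
      using basics_subset that by (rule subsetD)
    then show "pless R' a b \<longleftrightarrow> pless R a b" "pless R' b a \<longleftrightarrow> pless R b a"
      "comparable R' a b \<longleftrightarrow> comparable R a b"
      using \<open>a \<in> S\<close> pless_restrict[OF restrict] comparable_restrict[OF restrict] by simp_all
  qed
  then show "lower S' R' a \<longleftrightarrow> lower S R a" "upper S' R' a \<longleftrightarrow> upper S R a"
    "associated S' R' a B \<longleftrightarrow> associated S R a B"
    unfolding lower_def upper_def associated_def basics_eq basic_a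
    using \<open>S \<subseteq> S'\<close> \<open>a \<in> S\<close> by (auto, blast+)
qed

lemma related_of_lower:
  "lower S R a \<Longrightarrow>
    related S R a = {b \<in> S. pless R a b \<and> \<not> (\<exists>c\<in>S. pless R c b \<and> \<not> comparable R c a)}"
  unfolding related_def lower_def by auto

lemma related_of_upper:
  "upper S R a \<Longrightarrow> \<not> lower S R a \<Longrightarrow>
    related S R a = {b \<in> S. pless R b a \<and> \<not> (\<exists>c\<in>S. pless R b c \<and> \<not> comparable R c a)}
      - {l \<in> S. lower S R l \<and> associated S R l {b \<in> basics S R. comparable R a b}}"
  unfolding related_def upper_def by auto

definition lower_not_upper :: "'a set \<Rightarrow> ('a \<times> 'a) set \<Rightarrow> bool" where
  "lower_not_upper S R \<longleftrightarrow> (\<forall>a. lower S R a \<longrightarrow> \<not> upper S R a)"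

definition lower_basics_total :: "'a set \<Rightarrow> ('a \<times> 'a) set \<Rightarrow> bool" where
  "lower_basics_total S R \<longleftrightarrow>
     (\<forall>a. lower S R a \<and> (\<forall>b\<in>basics S R. comparable R a b) \<longrightarrow> (\<forall>c\<in>S. comparable R a c))"

lemma lower_not_upper_extend:
  assumes restrict: "R' \<inter> S \<times> S = R"
    and basics_eq: "basics S' R' = basics S R" and "S \<subseteq> S'"
    and new_not_both: "\<And>a. a \<in> S' - S \<Longrightarrow> \<not> (lower S' R' a \<and> upper S' R' a)"
    and "lower_not_upper S R"
  shows "lower_not_upper S' R'"
  unfolding lower_not_upper_def
proof (intro allI impI)
  fix a
  assume lower_a: "lower S' R' a"
  show "\<not> upper S' R' a"
  proof (cases "a \<in> S")
    case True
    then show ?thesis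
      using lower_a lower_iff_of_basics_eq[OF restrict basics_eq \<open>S \<subseteq> S'\<close> True]
        upper_iff_of_basics_eq[OF restrict basics_eq \<open>S \<subseteq> S'\<close> True] \<open>lower_not_upper S R\<close>
      unfolding lower_not_upper_def by blast
  next
    case False
    then show ?thesis
      using lower_a new_not_both unfolding lower_def by blast
  qed
qed

lemma lower_basics_total_extend:
  assumes restrict: "R' \<inter> S \<times> S = R"
    and basics_eq: "basics S' R' = basics S R" and "S \<subseteq> S'"
    and new_total: "\<And>a c. a \<in> S' - S \<Longrightarrow> c \<in> S' \<Longrightarrow> comparable R' a c"
    and "lower_basics_total S R"
  shows "lower_basics_total S' R'"
  unfolding lower_basics_total_def
proof (intro allI impI ballI)
  fix a c
  assume a: "lower S' R' a \<and> (\<forall>b\<in>basics S' R'. comparable R' a b)" and "c \<in> S'"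
  show "comparable R' a c"
  proof (cases "a \<in> S")
    case True
    note comparable_old = comparable_restrict[OF restrict True]
    have "comparable R a b" if "b \<in> basics S R" for b
      using a that basics_eq comparable_old[OF subsetD[OF basics_subset that]] by auto
    moreover have "lower S R a"
      using a lower_iff_of_basics_eq[OF restrict basics_eq \<open>S \<subseteq> S'\<close> True] by blast
    ultimately have "\<forall>c\<in>S. comparable R a c"
      using \<open>lower_basics_total S R\<close> unfolding lower_basics_total_def by blast
    moreover have "comparable R' a c" if "c \<in> S' - S"
      using new_total[OF that] \<open>a \<in> S\<close> \<open>S \<subseteq> S'\<close> unfolding comparable_def by blast
    ultimately show ?thesis
      using \<open>c \<in> S'\<close> comparable_old by blast
  next
    case False
    then show ?thesis
      using a \<open>c \<in> S'\<close> new_total unfolding lower_def by blast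
  qed
qed

section \<open>Adding a greatest element\<close>

lemma add_top_rel_simps:
  assumes "R \<subseteq> S \<times> S" "g \<notin> S"
  shows "x \<in> S \<Longrightarrow> y \<in> S \<Longrightarrow> (x, y) \<in> add_top_rel S R g \<longleftrightarrow> (x, y) \<in> R"
    and "x \<in> insert g S \<Longrightarrow> (x, g) \<in> add_top_rel S R g"
    and "(g, y) \<in> add_top_rel S R g \<longleftrightarrow> y = g"
    and "(x, y) \<in> add_top_rel S R g \<Longrightarrow> x \<in> insert g S \<and> y \<in> insert g S"
  using assms by (auto simp: add_top_rel_def)

lemma add_top_rel_restrict:
  assumes "R \<subseteq> S \<times> S" "g \<notin> S"
  shows "add_top_rel S R g \<inter> S \<times> S = R"
  using assms unfolding add_top_rel_def by auto

lemma basic_add_top_rel_iff: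
  assumes "R \<subseteq> S \<times> S" "g \<notin> S" "x \<in> S"
  shows "basic (insert g S) (add_top_rel S R g) x \<longleftrightarrow> basic S R x"
  using assms add_top_rel_simps[OF assms(1,2)] unfolding basic_def pless_def comparable_def
  by (intro iffI conjI) (auto 0 3)

lemma new_top_not_basic:
  assumes "R \<subseteq> S \<times> S" "g \<notin> S" "\<forall>x\<in>S. (x, x) \<in> R"
    and "m \<in> S" "\<forall>w\<in>S. (m, w) \<in> R \<longrightarrow> w = m"
  shows "\<not> basic (insert g S) (add_top_rel S R g) g"
proof -
  let ?S = "insert g S" and ?R = "add_top_rel S R g"
  note rel = add_top_rel_simps[OF assms(1,2)]
  show ?thesis
  proof (cases "\<forall>w\<in>S. (w, m) \<in> R")
    case True
    then have "twin_below ?S ?R m g"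
      using assms rel unfolding twin_below_def pless_def by auto
    then show ?thesis
      using \<open>m \<in> S\<close> unfolding basic_iff by blast
  next
    case False
    then obtain w where "w \<in> S" "(w, m) \<notin> R"
      by blast
    moreover have "(m, w) \<notin> R"
      using assms(3,5) calculation by auto
    ultimately have "fork_below ?S ?R g"
      using assms rel unfolding fork_below_def pless_def comparable_def by blast
    then show ?thesis
      unfolding basic_iff by blast
  qed
qed

lemma basics_add_top_rel:
  assumes "R \<subseteq> S \<times> S" "g \<notin> S" "\<forall>x\<in>S. (x, x) \<in> R"
    and "m \<in> S" "\<forall>w\<in>S. (m, w) \<in> R \<longrightarrow> w = m"
  shows "basics (insert g S) (add_top_rel S R g) = basics S R"
  using new_top_not_basic[OF assms] basic_add_top_rel_iff[OF assms(1,2)]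
  unfolding basics_def by auto

lemma new_top_not_lower:
  assumes "R \<subseteq> S \<times> S" "g \<notin> S"
  shows "\<not> lower (insert g S) (add_top_rel S R g) g"
  using add_top_rel_simps(3)[OF assms] unfolding lower_def pless_def by auto

lemma chain_in_add_top_rel_iff:
  assumes "R \<subseteq> S \<times> S" "g \<notin> S"
  shows "chain_in (insert g S) (add_top_rel S R g) \<longleftrightarrow> chain_in S R"
  using comparable_restrict[OF add_top_rel_restrict[OF assms]] add_top_rel_simps(2)[OF assms]
  unfolding chain_in_def comparable_def by auto

lemma least_in_add_top_rel_iff:
  assumes "R \<subseteq> S \<times> S" "g \<notin> S" "S \<noteq> {}" "x \<in> insert g S"
  shows "least_in (insert g S) (add_top_rel S R g) x \<longleftrightarrow> x \<in> S \<and> least_in S R x"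
proof (cases "x = g")
  case True
  obtain m where "m \<in> S"
    using \<open>S \<noteq> {}\<close> by blast
  then have "m \<in> insert g S" "m \<noteq> g" "(m, g) \<in> add_top_rel S R g"
    using add_top_rel_simps(2)[OF assms(1,2)] \<open>g \<notin> S\<close> by auto
  then show ?thesis
    using True \<open>g \<notin> S\<close> unfolding least_in_def by blast
next
  case False
  then show ?thesis
    using assms add_top_rel_simps[OF assms(1,2)] unfolding least_in_def by auto
qed

section \<open>Adding a least element\<close>

definition add_bot_rel :: "'a set \<Rightarrow> ('a \<times> 'a) set \<Rightarrow> 'a \<Rightarrow> ('a \<times> 'a) set" where
  "add_bot_rel S R l = R \<union> {(l, x) | x. x \<in> insert l S}"

lemma least_not_basic_if_not_chain:
  assumes "\<forall>y\<in>S. (y, y) \<in> R" "\<not> chain_in S R" "x \<in> S" "least_in S R x"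
  shows "\<not> basic S R x"
proof -
  from assms(2) obtain u v where uv: "u \<in> S" "v \<in> S" "\<not> comparable R u v"
    unfolding chain_in_def by auto
  then have "pless R x u" "pless R x v"
    using assms(1,3,4) unfolding least_in_def comparable_def pless_def by auto
  then have "fork_above S R x"
    using uv unfolding fork_above_def by blast
  then show ?thesis
    unfolding basic_iff by blast
qed

lemma add_bot_rel_simps:
  assumes "R \<subseteq> S \<times> S" "l \<notin> S"
  shows "x \<in> S \<Longrightarrow> y \<in> S \<Longrightarrow> (x, y) \<in> add_bot_rel S R l \<longleftrightarrow> (x, y) \<in> R"
    and "x \<in> insert l S \<Longrightarrow> (l, x) \<in> add_bot_rel S R l"
    and "(x, l) \<in> add_bot_rel S R l \<longleftrightarrow> x = l"
    and "(x, y) \<in> add_bot_rel S R l \<Longrightarrow> x \<in> insert l S \<and> y \<in> insert l S"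
  using assms by (auto simp: add_bot_rel_def)

lemma add_bot_rel_restrict:
  assumes "R \<subseteq> S \<times> S" "l \<notin> S"
  shows "add_bot_rel S R l \<inter> S \<times> S = R"
  using assms unfolding add_bot_rel_def by auto

lemma basic_add_bot_rel_iff:
  assumes "R \<subseteq> S \<times> S" "l \<notin> S" "x \<in> S"
  shows "basic (insert l S) (add_bot_rel S R l) x \<longleftrightarrow> basic S R x \<and> \<not> least_in S R x"
  using assms add_bot_rel_simps[OF assms(1,2)]
  unfolding basic_def pless_def comparable_def least_in_def
  by (intro iffI conjI) (auto 0 3)

lemma basic_new_bot_iff:
  assumes "R \<subseteq> S \<times> S" "l \<notin> S"
  shows "basic (insert l S) (add_bot_rel S R l) l \<longleftrightarrow> chain_in S R"
  using assms add_bot_rel_simps[OF assms] unfolding basic_def pless_def comparable_def chain_in_def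
  by auto

lemma basics_add_bot_rel_chain:
  assumes "R \<subseteq> S \<times> S" "l \<notin> S" "chain_in S R" "basics S R = {x \<in> S. least_in S R x}"
  shows "basics (insert l S) (add_bot_rel S R l) = {l}"
  using basic_add_bot_rel_iff[OF assms(1,2)] basic_new_bot_iff[OF assms(1,2)] assms(3,4)
  unfolding basics_def by auto

lemma basics_add_bot_rel_not_chain:
  assumes "R \<subseteq> S \<times> S" "l \<notin> S" "\<forall>x\<in>S. (x, x) \<in> R" "\<not> chain_in S R"
  shows "basics (insert l S) (add_bot_rel S R l) = basics S R"
  using basic_add_bot_rel_iff[OF assms(1,2)] basic_new_bot_iff[OF assms(1,2)]
    least_not_basic_if_not_chain[OF assms(3,4)] assms(4)
  unfolding basics_def by auto

lemma chain_in_add_bot_rel_iff: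
  assumes "R \<subseteq> S \<times> S" "l \<notin> S"
  shows "chain_in (insert l S) (add_bot_rel S R l) \<longleftrightarrow> chain_in S R"
  using comparable_restrict[OF add_bot_rel_restrict[OF assms]] add_bot_rel_simps(2)[OF assms]
  unfolding chain_in_def comparable_def by auto

lemma least_in_add_bot_rel_iff:
  assumes "R \<subseteq> S \<times> S" "l \<notin> S" "x \<in> insert l S"
  shows "least_in (insert l S) (add_bot_rel S R l) x \<longleftrightarrow> x = l"
  using assms add_bot_rel_simps(2,3)[OF assms(1,2)] unfolding least_in_def by auto

section \<open>Disjoint union\<close>

lemma basic_union_iff:
  assumes "R1 \<subseteq> S1 \<times> S1" "R2 \<subseteq> S2 \<times> S2" "S1 \<inter> S2 = {}" "x \<in> S1"
  shows "basic (S1 \<union> S2) (R1 \<union> R2) x \<longleftrightarrow> basic S1 R1 x"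
proof -
  let ?S = "S1 \<union> S2" and ?R = "R1 \<union> R2"
  have pless_x: "pless ?R u x \<longleftrightarrow> pless R1 u x" "pless ?R x u \<longleftrightarrow> pless R1 x u"
    and pless_in: "pless R1 u x \<Longrightarrow> u \<in> S1" "pless R1 x u \<Longrightarrow> u \<in> S1" for u
    using assms unfolding pless_def by auto
  have rel_S1: "u \<in> S1 \<Longrightarrow> (u, v) \<in> ?R \<longleftrightarrow> (u, v) \<in> R1"
    "u \<in> S1 \<Longrightarrow> (v, u) \<in> ?R \<longleftrightarrow> (v, u) \<in> R1" for u v
    using assms by auto
  have rel_S2: "(u, w) \<notin> ?R" "(w, u) \<notin> ?R" if "u \<in> S1" "w \<in> S2" for u w
    using assms that by auto
  have comp_S1: "u \<in> S1 \<Longrightarrow> comparable ?R u v \<longleftrightarrow> comparable R1 u v" for u v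
    unfolding comparable_def by (simp only: rel_S1)
  have "fork_below ?S ?R x \<longleftrightarrow> fork_below S1 R1 x" "fork_above ?S ?R x \<longleftrightarrow> fork_above S1 R1 x"
    unfolding fork_below_def fork_above_def pless_x using pless_in comp_S1 by blast+
  moreover have "twin_below ?S ?R u x \<longleftrightarrow> twin_below S1 R1 u x" if "u \<in> S1" for u
    unfolding twin_below_def pless_x using that assms(4) rel_S1 rel_S2 by auto
  moreover have "twin_below ?S ?R u x \<Longrightarrow> u \<in> S1" for u
    unfolding twin_below_def pless_x using pless_in by blast
  ultimately show ?thesis
    unfolding basic_iff using assms(4) by auto
qed

lemma basics_union:
  assumes "R1 \<subseteq> S1 \<times> S1" "R2 \<subseteq> S2 \<times> S2" "S1 \<inter> S2 = {}"
  shows "basics (S1 \<union> S2) (R1 \<union> R2) = basics S1 R1 \<union> basics S2 R2"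
proof -
  have "S2 \<inter> S1 = {}" "S2 \<union> S1 = S1 \<union> S2" "R2 \<union> R1 = R1 \<union> R2"
    using assms(3) by auto
  then show ?thesis
    using basic_union_iff[OF assms] basic_union_iff[OF assms(2,1)]
    unfolding basics_def by auto
qed

lemma
  assumes "R1 \<subseteq> S1 \<times> S1" "R2 \<subseteq> S2 \<times> S2" "S1 \<inter> S2 = {}" "a \<in> S1"
  shows lower_union_iff: "lower (S1 \<union> S2) (R1 \<union> R2) a \<longleftrightarrow> lower S1 R1 a"
    and upper_union_iff: "upper (S1 \<union> S2) (R1 \<union> R2) a \<longleftrightarrow> upper S1 R1 a"
proof -
  have "pless (R1 \<union> R2) a b \<longleftrightarrow> pless R1 a b" "pless (R1 \<union> R2) b a \<longleftrightarrow> pless R1 b a"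
    and "pless R1 a b \<Longrightarrow> b \<in> S1" "pless R1 b a \<Longrightarrow> b \<in> S1" for b
    using assms unfolding pless_def by auto
  moreover have "b \<in> S1 \<Longrightarrow> b \<in> basics (S1 \<union> S2) (R1 \<union> R2) \<longleftrightarrow> b \<in> basics S1 R1" for b
    using basic_union_iff[OF assms(1-3)] unfolding basics_def by auto
  ultimately show "lower (S1 \<union> S2) (R1 \<union> R2) a \<longleftrightarrow> lower S1 R1 a"
    "upper (S1 \<union> S2) (R1 \<union> R2) a \<longleftrightarrow> upper S1 R1 a"
    unfolding lower_def upper_def basic_union_iff[OF assms] using assms(4) by blast+
qed

lemma lower_not_upper_union:
  assumes R1: "R1 \<subseteq> S1 \<times> S1" and R2: "R2 \<subseteq> S2 \<times> S2" and disj: "S1 \<inter> S2 = {}"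
    and "lower_not_upper S1 R1" "lower_not_upper S2 R2"
  shows "lower_not_upper (S1 \<union> S2) (R1 \<union> R2)"
  unfolding lower_not_upper_def
proof (intro allI impI)
  fix a
  assume lower_a: "lower (S1 \<union> S2) (R1 \<union> R2) a"
  have disj': "S2 \<inter> S1 = {}" and swap: "S2 \<union> S1 = S1 \<union> S2" "R2 \<union> R1 = R1 \<union> R2"
    using disj by auto
  have "a \<in> S1 \<or> a \<in> S2"
    using lower_a unfolding lower_def by blast
  then show "\<not> upper (S1 \<union> S2) (R1 \<union> R2) a"
  proof
    assume "a \<in> S1"
    then show ?thesis
      using lower_a lower_union_iff[OF R1 R2 disj] upper_union_iff[OF R1 R2 disj]
        \<open>lower_not_upper S1 R1\<close> unfolding lower_not_upper_def by blast
  next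
    assume "a \<in> S2"
    then show ?thesis
      using lower_a lower_union_iff[OF R2 R1 disj', unfolded swap]
        upper_union_iff[OF R2 R1 disj', unfolded swap]
        \<open>lower_not_upper S2 R2\<close> unfolding lower_not_upper_def by blast
  qed
qed

text \<open>Holds vacuously: no element is comparable to basic elements of both components.\<close>

lemma lower_basics_total_union:
  assumes "R1 \<subseteq> S1 \<times> S1" "R2 \<subseteq> S2 \<times> S2" "S1 \<inter> S2 = {}"
    and "b1 \<in> basics S1 R1" "b2 \<in> basics S2 R2"
  shows "lower_basics_total (S1 \<union> S2) (R1 \<union> R2)"
  unfolding lower_basics_total_def
proof (intro allI impI)
  fix a
  let ?R = "R1 \<union> R2"
  assume "lower (S1 \<union> S2) ?R a \<and> (\<forall>b\<in>basics (S1 \<union> S2) ?R. comparable ?R a b)"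
  then have "comparable ?R a b1" "comparable ?R a b2"
    using assms(4,5) basics_union[OF assms(1-3)] by auto
  moreover have "b1 \<in> S1" "b2 \<in> S2"
    using assms(4,5) unfolding basics_def by auto
  ultimately have False
    using assms(1-3) unfolding comparable_def by blast
  then show "\<forall>c\<in>S1 \<union> S2. comparable (R1 \<union> R2) a c" ..
qed

section \<open>An invariant of V-posets\<close>

definition vposet_inv :: "'a set \<Rightarrow> ('a \<times> 'a) set \<Rightarrow> bool" where
  "vposet_inv S R \<longleftrightarrow> R \<subseteq> S \<times> S \<and> (\<forall>x\<in>S. (x, x) \<in> R) \<and>
     (S \<noteq> {} \<longrightarrow> (\<exists>m\<in>S. \<forall>w\<in>S. (m, w) \<in> R \<longrightarrow> w = m) \<and> basics S R \<noteq> {}) \<and>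
     (chain_in S R \<longrightarrow> basics S R = {x \<in> S. least_in S R x}) \<and>
     lower_not_upper S R \<and> lower_basics_total S R"

lemma vposet_inv_empty: "vposet_inv {} {}"
  unfolding vposet_inv_def lower_not_upper_def lower_basics_total_def lower_def basics_def
  by auto

lemma vposet_inv_singleton: "vposet_inv {x} {(x, x)}"
proof -
  have "basics {x} {(x, x)} = {x}"
    unfolding basics_def basic_def pless_def by auto
  moreover have "\<not> lower {x} {(x, x)} a" for a
    unfolding lower_def pless_def by auto
  ultimately show ?thesis
    unfolding vposet_inv_def lower_not_upper_def lower_basics_total_def least_in_def by auto
qed

lemma vposet_inv_add_top:
  assumes inv: "vposet_inv S R" and "g \<notin> S"
  shows "vposet_inv (insert g S) (add_top_rel S R g)"
proof (cases "S = {}")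
  case True
  then have "R = {}"
    using inv unfolding vposet_inv_def by auto
  then show ?thesis
    using True vposet_inv_singleton unfolding add_top_rel_def by auto
next
  case False
  let ?S = "insert g S" and ?R = "add_top_rel S R g"
  from inv have R: "R \<subseteq> S \<times> S" and refl: "\<forall>x\<in>S. (x, x) \<in> R"
    unfolding vposet_inv_def by auto
  from inv False obtain m where m: "m \<in> S" "\<forall>w\<in>S. (m, w) \<in> R \<longrightarrow> w = m"
    unfolding vposet_inv_def by blast
  note rel = add_top_rel_simps[OF R \<open>g \<notin> S\<close>]
  note restrict = add_top_rel_restrict[OF R \<open>g \<notin> S\<close>]
  have basics_eq: "basics ?S ?R = basics S R"
    using basics_add_top_rel[OF R \<open>g \<notin> S\<close> refl m] .
  have new_total: "comparable ?R a c" if "a \<in> ?S - S" "c \<in> ?S" for a c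
    using that rel(2) unfolding comparable_def by auto
  have new_not_both: "\<not> (lower ?S ?R a \<and> upper ?S ?R a)" if "a \<in> ?S - S" for a
    using that new_top_not_lower[OF R \<open>g \<notin> S\<close>] by auto
  have "lower_not_upper ?S ?R" "lower_basics_total ?S ?R"
    using lower_not_upper_extend[OF restrict basics_eq subset_insertI new_not_both]
      lower_basics_total_extend[OF restrict basics_eq subset_insertI new_total] inv
    unfolding vposet_inv_def by auto
  moreover have "chain_in ?S ?R \<longrightarrow> basics ?S ?R = {x \<in> ?S. least_in ?S ?R x}"
    using inv chain_in_add_top_rel_iff[OF R \<open>g \<notin> S\<close>] least_in_add_top_rel_iff[OF R \<open>g \<notin> S\<close> False]
      basics_eq unfolding vposet_inv_def by auto
  moreover have "?R \<subseteq> ?S \<times> ?S" "\<forall>x\<in>?S. (x, x) \<in> ?R" "\<forall>w\<in>?S. (g, w) \<in> ?R \<longrightarrow> w = g"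
    using R refl rel by (auto simp: add_top_rel_def)
  moreover have "basics ?S ?R \<noteq> {}"
    using inv False basics_eq unfolding vposet_inv_def by blast
  ultimately show ?thesis
    unfolding vposet_inv_def by blast
qed

lemma vposet_inv_add_bot:
  assumes inv: "vposet_inv S R" and "l \<notin> S"
  shows "vposet_inv (insert l S) (add_bot_rel S R l)"
proof (cases "S = {}")
  case True
  then have "R = {}"
    using inv unfolding vposet_inv_def by auto
  then show ?thesis
    using True vposet_inv_singleton unfolding add_bot_rel_def by auto
next
  case False
  let ?S = "insert l S" and ?R = "add_bot_rel S R l"
  from inv have R: "R \<subseteq> S \<times> S" and refl: "\<forall>x\<in>S. (x, x) \<in> R"
    unfolding vposet_inv_def by auto
  from inv False obtain m where m: "m \<in> S" "\<forall>w\<in>S. (m, w) \<in> R \<longrightarrow> w = m"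
    unfolding vposet_inv_def by blast
  note rel = add_bot_rel_simps[OF R \<open>l \<notin> S\<close>]
  note restrict = add_bot_rel_restrict[OF R \<open>l \<notin> S\<close>]
  have common: "?R \<subseteq> ?S \<times> ?S" "\<forall>x\<in>?S. (x, x) \<in> ?R" "\<forall>w\<in>?S. (m, w) \<in> ?R \<longrightarrow> w = m"
    using R refl m rel \<open>l \<notin> S\<close> by (auto simp: add_bot_rel_def)
  show ?thesis
  proof (cases "chain_in S R")
    case True
    then have basics_eq: "basics ?S ?R = {l}"
      using basics_add_bot_rel_chain[OF R \<open>l \<notin> S\<close>] inv unfolding vposet_inv_def by blast
    have "\<not> lower ?S ?R a" for a
      using rel(3) unfolding lower_def basics_eq pless_def by auto
    then show ?thesis
      unfolding vposet_inv_def lower_not_upper_def lower_basics_total_def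
      using common m(1) basics_eq least_in_add_bot_rel_iff[OF R \<open>l \<notin> S\<close>] by auto
  next
    case False
    have basics_eq: "basics ?S ?R = basics S R"
      using basics_add_bot_rel_not_chain[OF R \<open>l \<notin> S\<close> refl False] .
    have new_total: "comparable ?R a c" if "a \<in> ?S - S" "c \<in> ?S" for a c
      using that rel(2) unfolding comparable_def by auto
    have new_not_both: "\<not> (lower ?S ?R a \<and> upper ?S ?R a)" if "a \<in> ?S - S" for a
      using that rel(3) unfolding upper_def pless_def by auto
    have "lower_not_upper ?S ?R" "lower_basics_total ?S ?R"
      using lower_not_upper_extend[OF restrict basics_eq subset_insertI new_not_both]
        lower_basics_total_extend[OF restrict basics_eq subset_insertI new_total] inv
      unfolding vposet_inv_def by auto
    then show ?thesis
      using common m(1) basics_eq chain_in_add_bot_rel_iff[OF R \<open>l \<notin> S\<close>] False inv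
      unfolding vposet_inv_def by blast
  qed
qed

lemma vposet_inv_union_nonempty:
  assumes inv1: "vposet_inv S1 R1" and inv2: "vposet_inv S2 R2" and disj: "S1 \<inter> S2 = {}"
    and "S1 \<noteq> {}" "S2 \<noteq> {}"
  shows "vposet_inv (S1 \<union> S2) (R1 \<union> R2)"
proof -
  let ?S = "S1 \<union> S2" and ?R = "R1 \<union> R2"
  have R1: "R1 \<subseteq> S1 \<times> S1" and R2: "R2 \<subseteq> S2 \<times> S2"
    using inv1 inv2 unfolding vposet_inv_def by auto
  obtain b1 b2 where b: "b1 \<in> basics S1 R1" "b2 \<in> basics S2 R2"
    using inv1 inv2 \<open>S1 \<noteq> {}\<close> \<open>S2 \<noteq> {}\<close> unfolding vposet_inv_def by blast
  then have b_in: "b1 \<in> S1" "b2 \<in> S2"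
    unfolding basics_def by auto
  then have incomparable: "\<not> comparable ?R b1 b2"
    using R1 R2 disj unfolding comparable_def by blast
  have basics_eq: "basics ?S ?R = basics S1 R1 \<union> basics S2 R2"
    using basics_union[OF R1 R2 disj] .
  have "lower_not_upper ?S ?R" "lower_basics_total ?S ?R"
    using lower_not_upper_union[OF R1 R2 disj] lower_basics_total_union[OF R1 R2 disj b]
      inv1 inv2 unfolding vposet_inv_def by auto
  moreover have "\<exists>m\<in>?S. \<forall>w\<in>?S. (m, w) \<in> ?R \<longrightarrow> w = m"
  proof -
    obtain m where m: "m \<in> S1" "\<forall>w\<in>S1. (m, w) \<in> R1 \<longrightarrow> w = m"
      using inv1 \<open>S1 \<noteq> {}\<close> unfolding vposet_inv_def by blast
    have "w = m" if "(m, w) \<in> ?R" for w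
    proof -
      have "(m, w) \<in> R1"
        using that m(1) R2 disj by auto
      then show ?thesis
        using m R1 by auto
    qed
    then show ?thesis
      using m(1) by blast
  qed
  moreover have "\<not> chain_in ?S ?R"
    using incomparable b_in unfolding chain_in_def by blast
  ultimately show ?thesis
    using inv1 inv2 R1 R2 b basics_eq unfolding vposet_inv_def by auto
qed

lemma vposet_inv_union:
  assumes inv1: "vposet_inv S1 R1" and inv2: "vposet_inv S2 R2" and disj: "S1 \<inter> S2 = {}"
  shows "vposet_inv (S1 \<union> S2) (R1 \<union> R2)"
proof -
  have R1: "R1 \<subseteq> S1 \<times> S1" and R2: "R2 \<subseteq> S2 \<times> S2"
    using inv1 inv2 unfolding vposet_inv_def by auto
  show ?thesis
  proof (cases "S1 = {} \<or> S2 = {}")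
    case True
    then consider "S1 = {}" "R1 = {}" | "S2 = {}" "R2 = {}"
      using R1 R2 by blast
    then show ?thesis
      using inv1 inv2 by cases simp_all
  next
    case False
    then show ?thesis
      using vposet_inv_union_nonempty[OF inv1 inv2 disj] by blast
  qed
qed

lemma vposet_inv: "vposet S R \<Longrightarrow> vposet_inv S R"
proof (induction rule: vposet.induct)
  case empty
  show ?case by (rule vposet_inv_empty)
next
  case (union S1 R1 S2 R2)
  from union.IH union.hyps(3) show ?case
    by (rule vposet_inv_union)
next
  case (top S R g)
  from vposet_inv_add_top[OF top.IH top.hyps(2)] show ?case
    unfolding add_top_rel_def .
next
  case (bot S R l)
  from vposet_inv_add_bot[OF bot.IH bot.hyps(2)] show ?case
    unfolding add_bot_rel_def .
qed

section \<open>A new greatest element on top of a V-poset\<close>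

lemma vposet_lower_not_upper:
  assumes "vposet S R" "lower S R a"
  shows "\<not> upper S R a"
  using vposet_inv[OF assms(1)] assms(2) unfolding vposet_inv_def lower_not_upper_def by blast

lemma vposet_lower_associated_basics_iff:
  assumes "vposet S R" "lower S R a"
  shows "associated S R a (basics S R) \<longleftrightarrow> (\<forall>c\<in>S. comparable R a c)"
proof -
  have "lower_basics_total S R"
    using vposet_inv[OF assms(1)] unfolding vposet_inv_def by blast
  moreover have "a \<in> S"
    using assms(2) unfolding lower_def by blast
  moreover have "b \<in> S" if "b \<in> basics S R" for b
    using basics_subset that by (rule subsetD)
  ultimately show ?thesis
    using assms(2) unfolding lower_basics_total_def associated_def by blast
qed

lemma vposet_add_top_rel_simps:
  assumes "vposet S R" "g \<notin> S" "a \<in> S"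
  defines "S' \<equiv> insert g S" and "R' \<equiv> add_top_rel S R g"
  shows "basics S' R' = basics S R"
    and "basic S' R' a \<longleftrightarrow> basic S R a"
    and "lower S' R' a \<longleftrightarrow> lower S R a"
    and "upper S' R' a \<longleftrightarrow> upper S R a"
    and "associated S' R' a B \<longleftrightarrow> associated S R a B"
proof -
  have inv: "vposet_inv S R"
    using vposet_inv[OF assms(1)] .
  then have R: "R \<subseteq> S \<times> S" and refl: "\<forall>x\<in>S. (x, x) \<in> R"
    unfolding vposet_inv_def by auto
  from inv \<open>a \<in> S\<close> obtain m where m: "m \<in> S" "\<forall>w\<in>S. (m, w) \<in> R \<longrightarrow> w = m"
    unfolding vposet_inv_def by blast
  show basics_eq: "basics S' R' = basics S R"
    unfolding S'_def R'_def using basics_add_top_rel[OF R \<open>g \<notin> S\<close> refl m] .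
  show "basic S' R' a \<longleftrightarrow> basic S R a"
    unfolding S'_def R'_def using basic_add_top_rel_iff[OF R \<open>g \<notin> S\<close> \<open>a \<in> S\<close>] .
  have restrict: "R' \<inter> S \<times> S = R"
    unfolding R'_def using add_top_rel_restrict[OF R \<open>g \<notin> S\<close>] .
  have "S \<subseteq> S'"
    unfolding S'_def by blast
  note props = restrict basics_eq \<open>S \<subseteq> S'\<close> \<open>a \<in> S\<close>
  show "lower S' R' a \<longleftrightarrow> lower S R a" "upper S' R' a \<longleftrightarrow> upper S R a"
    "associated S' R' a B \<longleftrightarrow> associated S R a B"
    using lower_iff_of_basics_eq[OF props] upper_iff_of_basics_eq[OF props]
      associated_iff_of_basics_eq[OF props] .
qed

lemma related_add_top_rel_upper:
  assumes "vposet S R" "g \<notin> S" "upper S R a"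
  defines "S' \<equiv> insert g S" and "R' \<equiv> add_top_rel S R g"
  shows "related S' R' a = related S R a"
proof -
  have R: "R \<subseteq> S \<times> S"
    using vposet_inv[OF assms(1)] unfolding vposet_inv_def by blast
  have "a \<in> S"
    using assms(3) unfolding upper_def by auto
  note simps = vposet_add_top_rel_simps[OF assms(1,2) \<open>a \<in> S\<close>, folded S'_def R'_def]
  note rel = add_top_rel_simps[OF R \<open>g \<notin> S\<close>, folded S'_def R'_def]
  have restrict: "R' \<inter> S \<times> S = R"
    unfolding R'_def using add_top_rel_restrict[OF R \<open>g \<notin> S\<close>] .
  have "\<not> lower S R a"
    using vposet_lower_not_upper[OF assms(1)] assms(3) by blast
  then have "\<not> lower S' R' a" "upper S' R' a"
    using simps(3,4) assms(3) by auto
  have pless_S: "pless R' x y \<longleftrightarrow> pless R x y" "comparable R' x y \<longleftrightarrow> comparable R x y"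
    if "x \<in> S" "y \<in> S" for x y
    using pless_restrict[OF restrict that] comparable_restrict[OF restrict that] by auto
  have not_below_a: "\<not> pless R' g a"
    using rel(3) \<open>a \<in> S\<close> \<open>g \<notin> S\<close> unfolding pless_def by auto
  have "comparable R' g a"
    using rel(2) \<open>a \<in> S\<close> unfolding comparable_def S'_def by auto
  then have below: "{b \<in> S'. pless R' b a \<and> \<not> (\<exists>c\<in>S'. pless R' b c \<and> \<not> comparable R' c a)}
      = {b \<in> S. pless R b a \<and> \<not> (\<exists>c\<in>S. pless R b c \<and> \<not> comparable R c a)}"
    using not_below_a pless_S \<open>a \<in> S\<close> unfolding S'_def by auto
  have "comparable R' a b \<longleftrightarrow> comparable R a b" if "b \<in> basics S R" for b
    using pless_S(2)[OF \<open>a \<in> S\<close> subsetD[OF basics_subset that]] .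
  then have "{b \<in> basics S' R'. comparable R' a b} = {b \<in> basics S R. comparable R a b}"
    unfolding simps(1) by auto
  moreover have "\<not> lower S' R' g"
    unfolding S'_def R'_def by (rule new_top_not_lower[OF R \<open>g \<notin> S\<close>])
  ultimately have lowers:
    "{l \<in> S'. lower S' R' l \<and> associated S' R' l {b \<in> basics S' R'. comparable R' a b}}
      = {l \<in> S. lower S R l \<and> associated S R l {b \<in> basics S R. comparable R a b}}"
    using vposet_add_top_rel_simps[OF assms(1,2)] unfolding S'_def R'_def by auto
  show ?thesis
    unfolding related_of_upper[OF assms(3) \<open>\<not> lower S R a\<close>]
      related_of_upper[OF \<open>upper S' R' a\<close> \<open>\<not> lower S' R' a\<close>] below lowers ..
qed

lemma related_add_top_rel_lower:
  assumes "vposet S R" "g \<notin> S" "lower S R a"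
  defines "S' \<equiv> insert g S" and "R' \<equiv> add_top_rel S R g"
  shows "related S' R' a =
    (if \<forall>c\<in>S. comparable R a c then insert g (related S R a) else related S R a)"
proof -
  have R: "R \<subseteq> S \<times> S"
    using vposet_inv[OF assms(1)] unfolding vposet_inv_def by blast
  have "a \<in> S"
    using assms(3) unfolding lower_def by auto
  note simps = vposet_add_top_rel_simps[OF assms(1,2) \<open>a \<in> S\<close>, folded S'_def R'_def]
  note rel = add_top_rel_simps[OF R \<open>g \<notin> S\<close>, folded S'_def R'_def]
  have restrict: "R' \<inter> S \<times> S = R"
    unfolding R'_def using add_top_rel_restrict[OF R \<open>g \<notin> S\<close>] .
  have pless_S: "pless R' x y \<longleftrightarrow> pless R x y" "comparable R' x y \<longleftrightarrow> comparable R x y"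
    if "x \<in> S" "y \<in> S" for x y
    using pless_restrict[OF restrict that] comparable_restrict[OF restrict that] by auto
  note related = related_of_lower[OF assms(3)]
  note related' = related_of_lower[OF simps(3)[THEN iffD2, OF assms(3)]]
  have old: "b \<in> related S' R' a \<longleftrightarrow> b \<in> related S R a" if "b \<in> S" for b
  proof -
    have "\<not> pless R' g b"
      using rel(3) that \<open>g \<notin> S\<close> unfolding pless_def by auto
    then have "(\<exists>c\<in>S'. pless R' c b \<and> \<not> comparable R' c a)
        \<longleftrightarrow> (\<exists>c\<in>S. pless R c b \<and> \<not> comparable R c a)"
      using pless_S that \<open>a \<in> S\<close> unfolding S'_def by auto
    then show ?thesis
      unfolding related related' using that pless_S \<open>a \<in> S\<close> unfolding S'_def by auto
  qed
  have new: "g \<in> related S' R' a \<longleftrightarrow> (\<forall>c\<in>S. comparable R a c)"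
  proof -
    have below_g: "pless R' c g" if "c \<in> S" for c
      using rel(2) that \<open>g \<notin> S\<close> unfolding pless_def S'_def by auto
    have "g \<in> related S' R' a \<longleftrightarrow> \<not> (\<exists>c\<in>S'. pless R' c g \<and> \<not> comparable R' c a)"
      unfolding related' using below_g[OF \<open>a \<in> S\<close>] unfolding S'_def by auto
    also have "\<dots> \<longleftrightarrow> (\<forall>c\<in>S. comparable R a c)"
      using below_g pless_S(2)[OF _ \<open>a \<in> S\<close>] unfolding S'_def pless_def comparable_def by auto
    finally show ?thesis .
  qed
  have "related S R a \<subseteq> S" "related S' R' a \<subseteq> S'"
    unfolding related related' by auto
  then show ?thesis
    using old new \<open>g \<notin> S\<close> unfolding S'_def by auto
qed

theorem lemma3p15:
  fixes S :: "'a set" and R :: "('a \<times> 'a) set" and A :: "'a set" and g :: 'a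
  assumes "vposet S R"
    and "maximal_antichain S R A"
    and "g \<notin> S"
  defines "S' \<equiv> insert g S" and "R' \<equiv> add_top_rel S R g"
  shows "card {a \<in> A. basic S R a} = card {a \<in> A. basic S' R' a} \<and>
    (\<forall>a\<in>A. upper S R a \<longrightarrow> related S' R' a = related S R a) \<and>
    (\<forall>a\<in>A. lower S R a \<and> \<not> associated S R a (basics S R)
           \<longrightarrow> related S' R' a = related S R a) \<and>
    (\<forall>a\<in>A. lower S R a \<and> associated S R a (basics S R)
           \<longrightarrow> related S' R' a = insert g (related S R a))"
proof -
  have "A \<subseteq> S"
    using assms(2) unfolding maximal_antichain_def antichain_def by blast
  then have "{a \<in> A. basic S R a} = {a \<in> A. basic S' R' a}"
    using vposet_add_top_rel_simps(2)[OF assms(1,3)] unfolding S'_def R'_def by blast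
  moreover have "related S' R' a = related S R a" if "upper S R a" for a
    using related_add_top_rel_upper[OF assms(1,3) that] unfolding S'_def R'_def .
  moreover have "related S' R' a =
      (if associated S R a (basics S R) then insert g (related S R a) else related S R a)"
    if "lower S R a" for a
    using related_add_top_rel_lower[OF assms(1,3) that]
      vposet_lower_associated_basics_iff[OF assms(1) that]
    unfolding S'_def R'_def by simp
  ultimately show ?thesis
    by simp
qed

end
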